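(* There exists a constant $c>0$ such that for all sufficiently large $n$ there is a partial function $f$ on $\{0,1\}^n$ that is minimally non-extendable and whose domain satisfies $|\mathrm{D}(f)| \ge 2^{cn}$ (i.e. $|\mathrm{D}(f)| = 2^{\Omega(n)}$).
   Context: A partial function $f$ on $\{0,1\}^n$ is a real-valued function defined on a subset $\mathrm{D}(f)\subseteq\{0,1\}^n$. A function $g:\{0,1\}^n\to\mathbb{R}$ is submodular if $g(x+\mathbf{e}_i)-g(x) \ge g(y+\mathbf{e}_i)-g(y)$ for all $i$ and all $x\le y$ (coordinatewise) with $x_i=y_i=0$, where $\mathbf{e}_i$ is the $i$-th standard basis vector. A partial function $f$ is extendable if there is a submodular $g:\{0,1\}^n\to\mathbb{R}$ agreeing with $f$ on $\mathrm{D}(f)$. For $\mathcal{A}\subseteq\{0,1\}^n$, $f|_{\mathcal{A}}$ is the partial function agreeing with $f$ on $\mathcal{A}\cap \mathrm{D}(f)$ and undefined elsewhere. $f$ is minimally non-extendable if $f$ is not extendable but $f|_{\mathcal{A}}$ is extendable for every proper subset $\mathcal{A}\subsetneq \mathrm{D}(f)$. *)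

theory Defs
  imports Complex_Main
begin

text \<open>A point x of {0,1}^n is encoded as its support, a subset of {..<n};
  x \<le> y coordinatewise is set inclusion, and x + e_i (for x_i = 0) is insert i x.\<close>

definition submodular :: "nat \<Rightarrow> (nat set \<Rightarrow> real) \<Rightarrow> bool" where
  "submodular n g \<longleftrightarrow>
     (\<forall>i<n. \<forall>X Y. X \<subseteq> Y \<and> Y \<subseteq> {..<n} \<and> i \<notin> Y \<longrightarrow>
        g (insert i X) - g X \<ge> g (insert i Y) - g Y)"

definition partial_fun_on :: "nat \<Rightarrow> (nat set \<rightharpoonup> real) \<Rightarrow> bool" where
  "partial_fun_on n f \<longleftrightarrow> dom f \<subseteq> Pow {..<n}"

definition extendable :: "nat \<Rightarrow> (nat set \<rightharpoonup> real) \<Rightarrow> bool" where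
  "extendable n f \<longleftrightarrow>
     (\<exists>g. submodular n g \<and> (\<forall>x\<in>dom f. f x = Some (g x)))"

definition minimally_non_extendable :: "nat \<Rightarrow> (nat set \<rightharpoonup> real) \<Rightarrow> bool" where
  "minimally_non_extendable n f \<longleftrightarrow>
     \<not> extendable n f \<and> (\<forall>A. A \<subset> dom f \<longrightarrow> extendable n (f |` A))"

end

theory Submission
  imports Defs
begin

text \<open>Pair the coordinates as {2m, 2m+1} for m < k and view the sets choosing exactly one
  element of each pair m with h \<le> m < k as the nodes of level h of a complete binary tree: the
  root is {} and there are 2^k leaves. A node P of level l+1 is the bottom of the diamond P,
  P+2l, P+(2l+1), P+2l+(2l+1) whose middle corners are its children; its top is a cap.
  There is a submodular function base k whose second differences vanish on these diamonds and
  are at least 1 on all other squares. The partial function equals base k on the leaves and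
  caps and base k + 1/4 at the root. For a submodular extension g the tight diamonds propagate
  g \<le> base k from the leaves up to the root, a contradiction. After removing any point x of the
  domain, adding 1/4 along the root path to x (and subtracting 1/4 at x if x is a cap) keeps
  base k submodular: the perturbation moves second differences by at most 1 and never breaks a
  diamond.\<close>

definition second_diff :: "(nat set \<Rightarrow> real) \<Rightarrow> nat set \<Rightarrow> nat \<Rightarrow> nat \<Rightarrow> real" where
  "second_diff g X i j = g (insert i X) + g (insert j X) - g X - g (insert i (insert j X))"

lemma second_diff_commute: "second_diff g X i j = second_diff g X j i"
  unfolding second_diff_def by (simp add: insert_commute)

lemma second_diff_add:
  "second_diff (\<lambda>Y. f Y + g Y) X i j = second_diff f X i j + second_diff g X i j"
  unfolding second_diff_def by simp

lemma second_diff_diff: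
  "second_diff (\<lambda>Y. f Y - g Y) X i j = second_diff f X i j - second_diff g X i j"
  unfolding second_diff_def by simp

lemma second_diff_sum:
  "second_diff (\<lambda>Y. \<Sum>l\<in>S. F l Y) X i j = (\<Sum>l\<in>S. second_diff (F l) X i j)"
  unfolding second_diff_def by (simp add: sum.distrib sum_subtractf)

lemma second_diff_bounded:
  assumes "\<And>Y. 0 \<le> p Y" "\<And>Y. p Y \<le> c"
  shows "- 2 * c \<le> second_diff p X i j" "second_diff p X i j \<le> 2 * c"
  unfolding second_diff_def
  using assms[of "insert i X"] assms[of "insert j X"] assms[of X] assms[of "insert i (insert j X)"]
  by linarith+

lemma submodular_iff_second_diff_nonneg:
  "submodular n g \<longleftrightarrow>
     (\<forall>X i j. X \<subseteq> {..<n} \<longrightarrow> i < n \<longrightarrow> j < n \<longrightarrow> i \<notin> X \<longrightarrow> j \<notin> X \<longrightarrow> i \<noteq> j \<longrightarrow>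
        0 \<le> second_diff g X i j)"
    (is "_ \<longleftrightarrow> ?local")
proof
  assume "submodular n g"
  then show ?local
    unfolding second_diff_def
  proof (intro allI impI)
    fix X i j assume "submodular n g" "X \<subseteq> {..<n}" "i < n" "j < n" "i \<notin> X" "j \<notin> X" "i \<noteq> j"
    moreover have "X \<subseteq> insert j X \<and> insert j X \<subseteq> {..<n} \<and> i \<notin> insert j X"
      using \<open>X \<subseteq> {..<n}\<close> \<open>j < n\<close> \<open>i \<notin> X\<close> \<open>i \<noteq> j\<close> by auto
    ultimately have "g (insert i (insert j X)) - g (insert j X) \<le> g (insert i X) - g X"
      unfolding submodular_def using \<open>i < n\<close> by (meson lessThan_iff)
    then show "0 \<le> g (insert i X) + g (insert j X) - g X - g (insert i (insert j X))"
      by simp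
  qed
next
  assume local: ?local
  show "submodular n g"
    unfolding submodular_def
  proof (intro allI impI)
    fix i X Y assume i: "i < n" and XY: "X \<subseteq> Y \<and> Y \<subseteq> {..<n} \<and> i \<notin> Y"
    have "g (insert i (X \<union> F)) - g (X \<union> F) \<le> g (insert i X) - g X"
      if "F \<subseteq> Y - X" for F
    proof -
      have "finite F" using that XY by (auto intro: finite_subset[of _ "{..<n}"])
      from this that show ?thesis
      proof (induction F rule: finite_subset_induct')
        case (insert a F)
        have "X \<union> F \<subseteq> {..<n}" "a < n" "i \<notin> X \<union> F" "a \<notin> X \<union> F" "i \<noteq> a"
          using XY insert.hyps by auto
        then have "0 \<le> second_diff g (X \<union> F) i a"
          using local i by blast
        then show ?case
          using insert.IH by (simp add: second_diff_def)
      qed simp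
    qed
    from this[of "Y - X"] show "g (insert i Y) - g Y \<le> g (insert i X) - g X"
      using XY by (simp add: Un_absorb1)
  qed
qed

definition node :: "nat \<Rightarrow> nat \<Rightarrow> nat set \<Rightarrow> bool" where
  "node k h P \<longleftrightarrow> P \<subseteq> {2*h..<2*k} \<and>
     (\<forall>m. h \<le> m \<longrightarrow> m < k \<longrightarrow> (2*m \<in> P \<longleftrightarrow> Suc (2*m) \<notin> P))"

abbreviation cap :: "nat \<Rightarrow> nat set \<Rightarrow> nat set" where
  "cap l P \<equiv> insert (2*l) (insert (Suc (2*l)) P)"

lemma node_subset: "node k h P \<Longrightarrow> P \<subseteq> {..<2*k}"
  unfolding node_def by auto

lemma node_finite: "node k h P \<Longrightarrow> finite P"
  by (rule finite_subset[OF node_subset]) simp_all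

lemma node_root: "node k k {}"
  unfolding node_def by auto

lemma node_pair_one: "node k h P \<Longrightarrow> h \<le> l \<Longrightarrow> l < k \<Longrightarrow> 2*l \<in> P \<longleftrightarrow> Suc (2*l) \<notin> P"
  unfolding node_def by auto

lemma node_pair_none: "node k h P \<Longrightarrow> l < h \<Longrightarrow> 2*l \<notin> P \<and> Suc (2*l) \<notin> P"
  unfolding node_def by auto

lemma node_child:
  assumes "node k (Suc l) P" "l < k" "i div 2 = l"
  shows "node k l (insert i P)"
proof -
  have i: "i = 2*l \<or> i = Suc (2*l)" using assms(3) by presburger
  have P: "P \<subseteq> {2 * Suc l..<2*k}" "\<And>m. Suc l \<le> m \<Longrightarrow> m < k \<Longrightarrow> 2*m \<in> P \<longleftrightarrow> Suc (2*m) \<notin> P"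
    using assms(1) unfolding node_def by auto
  have "2*m \<in> insert i P \<longleftrightarrow> Suc (2*m) \<notin> insert i P" if "l \<le> m" "m < k" for m
  proof (cases "m = l")
    case True then show ?thesis using P(1) i by auto
  next
    case False
    then have "Suc l \<le> m" using that by simp
    moreover from this have "2*m \<noteq> i" "Suc (2*m) \<noteq> i" using i by presburger+
    ultimately show ?thesis using P(2) that by auto
  qed
  moreover have "insert i P \<subseteq> {2*l..<2*k}" using P(1) i assms(2) by auto
  ultimately show ?thesis unfolding node_def by blast
qed

lemma not_node_cap: "node k (Suc l) P \<Longrightarrow> l < k \<Longrightarrow> \<not> node k h (cap l P)"
  unfolding node_def by (cases "h \<le> l") auto

lemma node_subset_eq:
  assumes "node k h P" "node k h' Q" "h \<le> h'" "P \<subseteq> Q"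
  shows "P = Q"
proof
  show "Q \<subseteq> P"
  proof
    fix y assume "y \<in> Q"
    define m where "m = y div 2"
    have "2*h' \<le> y" "y < 2*k" using \<open>y \<in> Q\<close> assms(2) unfolding node_def by auto
    then have y: "y = 2*m \<or> y = Suc (2*m)" "h' \<le> m" "m < k"
      unfolding m_def by presburger+
    then show "y \<in> P"
      using \<open>y \<in> Q\<close> assms node_pair_one[OF assms(1), of m] node_pair_one[OF assms(2), of m]
      by auto
  qed
qed (fact assms(4))

definition pair_even :: "nat \<Rightarrow> nat set \<Rightarrow> real" where
  "pair_even m X = (if (2*m \<in> X) = (Suc (2*m) \<in> X) then 1 else 0)"

definition defect :: "nat \<Rightarrow> nat \<Rightarrow> nat set \<Rightarrow> real" where
  "defect k l X = real (card (X \<inter> {..<2*l})) + real (card (X \<inter> {2*k..}))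
     + (\<Sum>m\<in>{Suc l..<k}. pair_even m X)"

definition pair_term :: "nat \<Rightarrow> nat \<Rightarrow> nat set \<Rightarrow> real" where
  "pair_term k l X = (if 2*l \<in> X \<and> Suc (2*l) \<in> X then 3 - defect k l X else 0)"

text \<open>The quadratic part of base k has second difference 3 everywhere. The defect is a
  nonnegative integer that vanishes on X exactly when X - {2l, 2l+1} is a node of level l+1,
  so pair_term k l cancels those 3 precisely on the diamonds of pair l.\<close>

definition base :: "nat \<Rightarrow> nat set \<Rightarrow> real" where
  "base k X = - 3 * real (card X) * (real (card X) - 1) / 2 + (\<Sum>l<k. pair_term k l X)"

lemma pair_even_insert_other: "i div 2 \<noteq> m \<Longrightarrow> pair_even m (insert i X) = pair_even m X"
  unfolding pair_even_def by auto

lemma second_diff_pair_even_nonpos: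
  "i \<noteq> j \<Longrightarrow> i \<notin> X \<Longrightarrow> j \<notin> X \<Longrightarrow> second_diff (pair_even m) X i j \<le> 0"
  unfolding second_diff_def pair_even_def by auto

lemma second_diff_card_Int:
  assumes "finite X" "i \<notin> X" "j \<notin> X" "i \<noteq> j"
  shows "second_diff (\<lambda>Y. real (card (Y \<inter> A))) X i j = 0"
  using assms by (cases "i \<in> A"; cases "j \<in> A") (auto simp: second_diff_def Int_insert_left)

lemma second_diff_defect_nonpos:
  assumes "finite X" "i \<notin> X" "j \<notin> X" "i \<noteq> j"
  shows "second_diff (defect k l) X i j \<le> 0"
proof -
  have "second_diff (defect k l) X i j = (\<Sum>m\<in>{Suc l..<k}. second_diff (pair_even m) X i j)"
    using second_diff_card_Int[OF assms, of "{..<2*l}"] second_diff_card_Int[OF assms, of "{2*k..}"]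
    unfolding defect_def second_diff_add second_diff_sum by simp
  also have "\<dots> \<le> 0"
    by (rule sum_nonpos) (use second_diff_pair_even_nonpos assms in auto)
  finally show ?thesis .
qed

lemma defect_nonneg: "0 \<le> defect k l X"
  unfolding defect_def by (auto intro!: add_nonneg_nonneg sum_nonneg simp: pair_even_def)

lemma defect_insert_same_pair:
  assumes "l < k" "i div 2 = l"
  shows "defect k l (insert i X) = defect k l X"
proof -
  have i: "i = 2*l \<or> i = Suc (2*l)" using assms(2) by presburger
  have "insert i X \<inter> {..<2*l} = X \<inter> {..<2*l}" "insert i X \<inter> {2*k..} = X \<inter> {2*k..}"
    using i assms(1) by auto
  moreover have "pair_even m (insert i X) = pair_even m X" if "m \<in> {Suc l..<k}" for m
    using that assms(2) pair_even_insert_other by auto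
  ultimately show ?thesis unfolding defect_def by simp
qed

lemma defect_insert_ge:
  assumes "finite X"
  shows "defect k l X - 1 \<le> defect k l (insert j X)"
proof -
  have card: "real (card (X \<inter> A)) \<le> real (card (insert j X \<inter> A))" for A
    using assms by (intro of_nat_mono card_mono) auto
  let ?S = "{Suc l..<k}"
  have "(\<Sum>m\<in>?S - {j div 2}. pair_even m (insert j X)) = (\<Sum>m\<in>?S - {j div 2}. pair_even m X)"
    by (rule sum.cong) (auto intro: pair_even_insert_other)
  moreover have "(\<Sum>m\<in>?S. f m) = (\<Sum>m\<in>?S - {j div 2}. f m) + (if j div 2 \<in> ?S then f (j div 2) else 0)"
    for f :: "nat \<Rightarrow> real"
    by (simp add: sum.remove)
  ultimately have "(\<Sum>m\<in>?S. pair_even m X) - 1 \<le> (\<Sum>m\<in>?S. pair_even m (insert j X))"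
    by (simp add: pair_even_def)
  then show ?thesis
    unfolding defect_def using card[of "{..<2*l}"] card[of "{2*k..}"] by linarith
qed

lemma node_if_defect_less_1:
  assumes "finite X" "defect k l X < 1" "2*l \<notin> X" "Suc (2*l) \<notin> X"
  shows "node k (Suc l) X"
proof -
  have sum: "0 \<le> (\<Sum>m\<in>{Suc l..<k}. pair_even m X)"
    unfolding pair_even_def by (auto intro!: sum_nonneg)
  then have "card (X \<inter> {..<2*l}) = 0" "card (X \<inter> {2*k..}) = 0"
    using assms(2) unfolding defect_def by linarith+
  then have "X \<inter> {..<2*l} = {}" "X \<inter> {2*k..} = {}"
    using assms(1) by auto
  then have "X \<subseteq> {2 * Suc l..<2*k}"
  proof (intro subsetI)
    fix x assume "x \<in> X"
    with \<open>X \<inter> {..<2*l} = {}\<close> \<open>X \<inter> {2*k..} = {}\<close> assms(3,4)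
    have "2*l \<le> x" "x < 2*k" "x \<noteq> 2*l" "x \<noteq> Suc (2*l)" by auto
    then show "x \<in> {2 * Suc l..<2*k}" by simp
  qed
  moreover have "2*m \<in> X \<longleftrightarrow> Suc (2*m) \<notin> X" if "Suc l \<le> m" "m < k" for m
  proof -
    have "pair_even m X \<le> (\<Sum>m\<in>{Suc l..<k}. pair_even m X)"
      by (rule member_le_sum) (use that in \<open>auto simp: pair_even_def\<close>)
    then show ?thesis using assms(2) sum unfolding defect_def pair_even_def by (auto split: if_splits)
  qed
  ultimately show ?thesis
    unfolding node_def by blast
qed

lemma defect_node:
  assumes "node k (Suc l) P"
  shows "defect k l P = 0"
proof -
  have "P \<inter> {..<2*l} = {}" "P \<inter> {2*k..} = {}" "\<forall>m\<in>{Suc l..<k}. pair_even m P = 0"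
    using assms unfolding node_def pair_even_def by auto
  then show ?thesis unfolding defect_def by simp
qed

lemma second_diff_pair_term_same_pair:
  assumes "l < k" "i div 2 = l" "j div 2 = l" "i \<noteq> j" "i \<notin> X" "j \<notin> X"
  shows "second_diff (pair_term k l) X i j = defect k l X - 3"
proof -
  have "{i, j} = {2*l, Suc (2*l)}" using assms(2-4) by auto
  moreover have "defect k l (insert i (insert j X)) = defect k l X"
    using defect_insert_same_pair assms(1-3) by simp
  ultimately show ?thesis
    using assms(5,6) unfolding second_diff_def pair_term_def by (auto simp: doubleton_eq_iff)
qed

lemma second_diff_pair_term_one_in_pair:
  assumes "l < k" "i div 2 = l" "j div 2 \<noteq> l" "i \<notin> X" "j \<notin> X" "finite X"
  shows "-1 \<le> second_diff (pair_term k l) X i j"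
proof -
  define i' where "i' = (if i = 2*l then Suc (2*l) else 2*l)"
  have pair: "{2*l, Suc (2*l)} = {i, i'}" "i' \<noteq> j" "i' \<noteq> i"
    using assms(2,3) unfolding i'_def by auto
  then have pair_term_eq: "pair_term k l Y = (if i \<in> Y \<and> i' \<in> Y then 3 - defect k l Y else 0)" for Y
    unfolding pair_term_def by (auto simp: doubleton_eq_iff)
  have "i \<noteq> j" using assms(2,3) by auto
  have "pair_term k l (insert i X) = (if i' \<in> X then 3 - defect k l X else 0)"
    "pair_term k l (insert i (insert j X)) = (if i' \<in> X then 3 - defect k l (insert j X) else 0)"
    "pair_term k l (insert j X) = 0" "pair_term k l X = 0"
    using assms(4) pair \<open>i \<noteq> j\<close> defect_insert_same_pair[OF assms(1,2)]
    unfolding pair_term_eq by auto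
  then have "second_diff (pair_term k l) X i j =
      (if i' \<in> X then defect k l (insert j X) - defect k l X else 0)"
    unfolding second_diff_def by simp
  then show ?thesis
    using defect_insert_ge[OF assms(6), of k l j] by auto
qed

lemma second_diff_pair_term_off_pair:
  assumes "i div 2 \<noteq> l" "j div 2 \<noteq> l" "i \<noteq> j" "i \<notin> X" "j \<notin> X" "finite X"
  shows "0 \<le> second_diff (pair_term k l) X i j"
proof -
  have off: "i \<noteq> 2*l" "i \<noteq> Suc (2*l)" "j \<noteq> 2*l" "j \<noteq> Suc (2*l)" using assms(1,2) by auto
  have "second_diff (pair_term k l) X i j =
      (if 2*l \<in> X \<and> Suc (2*l) \<in> X then - second_diff (defect k l) X i j else 0)"
    using off unfolding second_diff_def pair_term_def by auto
  then show ?thesis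
    using second_diff_defect_nonpos[OF assms(6,4,5,3)] by simp
qed

lemma second_diff_pair_term_incomplete:
  "\<not> (2*l \<in> insert i (insert j X) \<and> Suc (2*l) \<in> insert i (insert j X))
    \<Longrightarrow> second_diff (pair_term k l) X i j = 0"
  unfolding second_diff_def pair_term_def by auto

lemma second_diff_base:
  assumes "finite X" "i \<notin> X" "j \<notin> X" "i \<noteq> j"
  shows "second_diff (base k) X i j = 3 + (\<Sum>l<k. second_diff (pair_term k l) X i j)"
proof -
  let ?q = "\<lambda>Y. - 3 * real (card Y) * (real (card Y) - 1) / 2"
  have "card (insert i X) = Suc (card X)" "card (insert j X) = Suc (card X)"
    "card (insert i (insert j X)) = Suc (Suc (card X))"
    using assms by auto
  then have "second_diff ?q X i j = 3"
    unfolding second_diff_def by (simp add: field_simps)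
  moreover have "base k = (\<lambda>Y. ?q Y + (\<Sum>l<k. pair_term k l Y))"
    unfolding base_def by (rule ext) (rule refl)
  ultimately show ?thesis
    by (simp only: second_diff_add second_diff_sum)
qed

lemma second_diff_base_same_pair:
  assumes "l < k" "i div 2 = l" "j div 2 = l" "i \<noteq> j" "i \<notin> X" "j \<notin> X" "finite X"
  shows "defect k l X \<le> second_diff (base k) X i j"
proof -
  have "0 \<le> (\<Sum>l'\<in>{..<k} - {l}. second_diff (pair_term k l') X i j)"
    by (rule sum_nonneg) (use assms second_diff_pair_term_off_pair in auto)
  moreover have "(\<Sum>l'<k. second_diff (pair_term k l') X i j) =
      second_diff (pair_term k l) X i j + (\<Sum>l'\<in>{..<k} - {l}. second_diff (pair_term k l') X i j)"
    using assms(1) by (simp add: sum.remove)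
  ultimately show ?thesis
    using second_diff_base[OF assms(7,5,6,4)] second_diff_pair_term_same_pair[OF assms(1-6)] by simp
qed

lemma second_diff_base_ge_1:
  assumes "i div 2 = j div 2 \<Longrightarrow> k \<le> i div 2" "i \<noteq> j" "i \<notin> X" "j \<notin> X" "finite X"
  shows "1 \<le> second_diff (base k) X i j"
proof -
  let ?ind = "\<lambda>a l. if l = a then 1 else 0 :: real"
  have "- (?ind (i div 2) l + ?ind (j div 2) l) \<le> second_diff (pair_term k l) X i j"
    if lk: "l < k" for l
  proof -
    consider "l = i div 2" "l \<noteq> j div 2" | "l \<noteq> i div 2" "l = j div 2" | "l \<noteq> i div 2" "l \<noteq> j div 2"
      using assms(1) lk by (metis leD)
    then show ?thesis
    proof cases
      case 1
      have "-1 \<le> second_diff (pair_term k l) X i j"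
        by (rule second_diff_pair_term_one_in_pair) (use 1 lk assms(3-5) in auto)
      with 1 show ?thesis by simp
    next
      case 2
      have "-1 \<le> second_diff (pair_term k l) X j i"
        by (rule second_diff_pair_term_one_in_pair) (use 2 lk assms(3-5) in auto)
      with 2 show ?thesis by (simp only: second_diff_commute) simp
    next
      case 3
      have "0 \<le> second_diff (pair_term k l) X i j"
        by (rule second_diff_pair_term_off_pair) (use 3 assms(2-5) in auto)
      with 3 show ?thesis by simp
    qed
  qed
  then have "(\<Sum>l<k. - (?ind (i div 2) l + ?ind (j div 2) l))
      \<le> (\<Sum>l<k. second_diff (pair_term k l) X i j)"
    by (intro sum_mono) simp
  moreover have "(\<Sum>l<k. - (?ind (i div 2) l + ?ind (j div 2) l)) =
      - ((\<Sum>l<k. ?ind (i div 2) l) + (\<Sum>l<k. ?ind (j div 2) l))"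
    by (simp only: sum_negf sum.distrib)
  moreover have ind_sum: "(\<Sum>l<k. ?ind a l) \<le> 1" for a
    by (simp add: sum.delta')
  ultimately show ?thesis
    using second_diff_base[OF assms(5,3,4,2), of k] ind_sum[of "i div 2"] ind_sum[of "j div 2"]
    by linarith
qed

lemma second_diff_base_node:
  assumes "node k (Suc l) P" "l < k"
  shows "second_diff (base k) P (2*l) (Suc (2*l)) = 0"
proof -
  have P: "2*l \<notin> P" "Suc (2*l) \<notin> P" using node_pair_none[OF assms(1)] by auto
  have "second_diff (pair_term k l') P (2*l) (Suc (2*l)) = 0" if "l' \<in> {..<k} - {l}" for l'
  proof (rule second_diff_pair_term_incomplete)
    have "2*l' \<notin> P \<or> Suc (2*l') \<notin> P"
      using that node_pair_one[OF assms(1), of l'] node_pair_none[OF assms(1), of l']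
      by (cases "Suc l \<le> l'") auto
    then show "\<not> (2*l' \<in> cap l P \<and> Suc (2*l') \<in> cap l P)"
      using that by auto
  qed
  then have "(\<Sum>l'<k. second_diff (pair_term k l') P (2*l) (Suc (2*l))) =
      second_diff (pair_term k l) P (2*l) (Suc (2*l))"
    using assms(2) by (simp add: sum.remove)
  then show ?thesis
    using second_diff_base[OF node_finite[OF assms(1)] P] defect_node[OF assms(1)]
      second_diff_pair_term_same_pair[OF assms(2) _ _ _ P] by simp
qed

lemma submodular_base_plus:
  assumes "2*k \<le> n"
    and "\<And>X i j. -1 \<le> second_diff p X i j"
    and "\<And>l P. l < k \<Longrightarrow> node k (Suc l) P \<Longrightarrow> 0 \<le> second_diff p P (2*l) (Suc (2*l))"
  shows "submodular n (\<lambda>Y. base k Y + p Y)"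
  unfolding submodular_iff_second_diff_nonneg second_diff_add
proof (intro allI impI)
  fix X i j assume X: "X \<subseteq> {..<n}" and ij: "i < n" "j < n" "i \<notin> X" "j \<notin> X" "i \<noteq> j"
  have fin: "finite X" using X by (rule finite_subset) simp
  show "0 \<le> second_diff (base k) X i j + second_diff p X i j"
  proof (cases "i div 2 = j div 2 \<and> i div 2 < k")
    case True
    define l where "l = i div 2"
    have l: "l < k" "i div 2 = l" "j div 2 = l" using True unfolding l_def by auto
    have base: "defect k l X \<le> second_diff (base k) X i j"
      using second_diff_base_same_pair[OF l ij(5,3,4) fin] .
    show ?thesis
    proof (cases "defect k l X < 1")
      case True
      have "{i, j} = {2*l, Suc (2*l)}" using l ij(5) by auto
      then have "2*l \<notin> X" "Suc (2*l) \<notin> X" "second_diff p X i j = second_diff p X (2*l) (Suc (2*l))"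
        using ij(3,4) second_diff_commute[of p X i j] by (auto simp: doubleton_eq_iff)
      with True have "0 \<le> second_diff p X i j"
        using assms(3)[OF l(1) node_if_defect_less_1[OF fin]] by simp
      then show ?thesis using base defect_nonneg[of k l X] by simp
    qed (use base assms(2)[of X i j] in simp)
  next
    case False
    then show ?thesis
      using second_diff_base_ge_1[of i j k X] ij fin assms(2)[of X i j] by auto
  qed
qed

definition caps :: "nat \<Rightarrow> nat set set" where
  "caps k = {cap l P | l P. l < k \<and> node k (Suc l) P}"

definition tree_domain :: "nat \<Rightarrow> nat set set" where
  "tree_domain k = insert {} ({Y. node k 0 Y} \<union> caps k)"

definition tree_fn :: "nat \<Rightarrow> nat set \<rightharpoonup> real" where
  "tree_fn k Y =
     (if Y \<in> tree_domain k then Some (base k Y + (if Y = {} then 1/4 else 0)) else None)"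

lemma dom_tree_fn: "dom (tree_fn k) = tree_domain k"
  unfolding tree_fn_def dom_def by simp

lemma tree_domain_subset: "2*k \<le> n \<Longrightarrow> tree_domain k \<subseteq> Pow {..<n}"
  unfolding tree_domain_def caps_def using node_subset by fastforce

lemma leaf_nonempty: "node k 0 Y \<Longrightarrow> 0 < k \<Longrightarrow> Y \<noteq> {}"
  using node_pair_one[of k 0 Y 0] by auto

lemma tree_domain_inner_node_is_root:
  assumes "node k (Suc l) P" "l < k" "P \<in> tree_domain k"
  shows "P = {}"
proof -
  have "\<not> node k 0 P"
    using node_pair_one[of k 0 P 0] node_pair_none[OF assms(1), of 0] assms(2) by auto
  moreover have "P \<notin> caps k"
    using assms(1) not_node_cap unfolding caps_def by blast
  ultimately show ?thesis using assms(3) unfolding tree_domain_def by blast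
qed

lemma submodular_le_base_on_nodes:
  assumes g: "submodular n g" and n: "2*k \<le> n"
    and leaves: "\<And>Y. node k 0 Y \<Longrightarrow> g Y \<le> base k Y"
    and caps: "\<And>Y. Y \<in> caps k \<Longrightarrow> g Y = base k Y"
  shows "node k h P \<Longrightarrow> h \<le> k \<Longrightarrow> g P \<le> base k P"
proof (induction h arbitrary: P)
  case 0
  then show ?case using leaves by simp
next
  case (Suc l)
  have l: "l < k" using Suc.prems(2) by simp
  have P: "P \<subseteq> {..<n}" "2*l \<notin> P" "Suc (2*l) \<notin> P"
    using node_subset[OF Suc.prems(1)] node_pair_none[OF Suc.prems(1), of l] n by auto
  have "0 \<le> second_diff g P (2*l) (Suc (2*l))"
    using g P l n unfolding submodular_iff_second_diff_nonneg by simp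
  moreover have "second_diff (base k) P (2*l) (Suc (2*l)) = 0"
    using second_diff_base_node[OF Suc.prems(1) l] .
  moreover have "g (insert (2*l) P) \<le> base k (insert (2*l) P)"
    and "g (insert (Suc (2*l)) P) \<le> base k (insert (Suc (2*l)) P)"
    using Suc.IH node_child[OF Suc.prems(1) l] l by simp_all
  moreover have "g (cap l P) = base k (cap l P)"
    using caps Suc.prems(1) l unfolding caps_def by blast
  ultimately show ?case
    unfolding second_diff_def by linarith
qed

lemma tree_fn_not_extendable:
  assumes "0 < k" "2*k \<le> n"
  shows "\<not> extendable n (tree_fn k)"
proof
  assume "extendable n (tree_fn k)"
  then obtain g where g: "submodular n g"
    and agree: "\<And>Y. Y \<in> tree_domain k \<Longrightarrow> g Y = base k Y + (if Y = {} then 1/4 else 0)"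
    unfolding extendable_def dom_tree_fn by (auto simp: tree_fn_def)
  have "g {} \<le> base k {}"
  proof (rule submodular_le_base_on_nodes[OF g assms(2) _ _ node_root order_refl])
    show "g Y \<le> base k Y" if "node k 0 Y" for Y
      using agree[of Y] that leaf_nonempty[OF that assms(1)] unfolding tree_domain_def by simp
    show "g Y = base k Y" if "Y \<in> caps k" for Y
      using agree[of Y] that unfolding tree_domain_def caps_def by auto
  qed
  then show False
    using agree[of "{}"] unfolding tree_domain_def by simp
qed

text \<open>For a node Q, the nodes contained in Q are those on the path from the root to Q.\<close>

definition path_bump :: "nat \<Rightarrow> nat set \<Rightarrow> nat set \<Rightarrow> real" where
  "path_bump k Q Y = (if Y \<subseteq> Q \<and> (\<exists>h. node k h Y) then 1/4 else 0)"

definition point_bump :: "nat set \<Rightarrow> nat set \<Rightarrow> real" where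
  "point_bump x Y = (if Y = x then 1/4 else 0)"

lemma second_diff_path_bump_node:
  assumes "node k (Suc l) P" "l < k"
  shows "second_diff (path_bump k Q) P (2*l) (Suc (2*l)) =
    (if P \<subseteq> Q then ((if 2*l \<in> Q then 1 else 0) + (if Suc (2*l) \<in> Q then 1 else 0) - 1) / 4 else 0)"
proof -
  have "node k l (insert (2*l) P)" "node k l (insert (Suc (2*l)) P)"
    using node_child[OF assms] by simp_all
  then show ?thesis
    using assms not_node_cap[OF assms] unfolding second_diff_def path_bump_def by auto
qed

lemma second_diff_path_bump_ge: "- 1/2 \<le> second_diff (path_bump k Q) X i j"
  using second_diff_bounded(1)[of "path_bump k Q" "1/4"] unfolding path_bump_def by simp

lemma second_diff_point_bump_le: "second_diff (point_bump x) X i j \<le> 1/2"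
  using second_diff_bounded(2)[of "point_bump x" "1/4"] unfolding point_bump_def by simp

lemma submodular_base_path_bump_leaf:
  assumes "2*k \<le> n" "node k 0 T"
  shows "submodular n (\<lambda>Y. base k Y + path_bump k T Y)"
proof (rule submodular_base_plus[OF assms(1)])
  show "-1 \<le> second_diff (path_bump k T) X i j" for X i j
    using second_diff_path_bump_ge[of k T X i j] by simp
  show "0 \<le> second_diff (path_bump k T) P (2*l) (Suc (2*l))" if "l < k" "node k (Suc l) P" for l P
    using second_diff_path_bump_node[OF that(2,1), of T] node_pair_one[OF assms(2) _ that(1)] by auto
qed

lemma submodular_base_path_bump_cap:
  assumes n: "2*k \<le> n" and l0: "l0 < k" "node k (Suc l0) P0"
  shows "submodular n (\<lambda>Y. base k Y + (path_bump k P0 Y - point_bump (cap l0 P0) Y))"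
proof (rule submodular_base_plus[OF n])
  show "-1 \<le> second_diff (\<lambda>Y. path_bump k P0 Y - point_bump (cap l0 P0) Y) X i j" for X i j
    using second_diff_path_bump_ge[of k P0 X i j] second_diff_point_bump_le[of "cap l0 P0" X i j]
    unfolding second_diff_diff by simp
next
  fix l P assume l: "l < k" "node k (Suc l) P"
  let ?x = "cap l0 P0"
  have "node k l (insert (2*l) P)" "node k l (insert (Suc (2*l)) P)"
    using node_child[OF l(2,1)] by simp_all
  then have "insert (2*l) P \<noteq> ?x" "insert (Suc (2*l)) P \<noteq> ?x" "P \<noteq> ?x"
    using not_node_cap[OF l0(2,1)] l(2) by metis+
  then have point: "second_diff (point_bump ?x) P (2*l) (Suc (2*l)) = - point_bump ?x (cap l P)"
    unfolding second_diff_def point_bump_def by simp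
  have path: "second_diff (path_bump k P0) P (2*l) (Suc (2*l)) = -1/4"
    if "P \<subseteq> P0" "l \<le> l0"
    using second_diff_path_bump_node[OF l(2,1), of P0] node_pair_none[OF l0(2), of l] that by simp
  show "0 \<le> second_diff (\<lambda>Y. path_bump k P0 Y - point_bump ?x Y) P (2*l) (Suc (2*l))"
  proof (cases "P \<subseteq> P0 \<and> l \<le> l0")
    case True
    have "l = l0"
    proof (rule ccontr)
      assume "l \<noteq> l0"
      then have "2*l0 \<in> P \<or> Suc (2*l0) \<in> P"
        using True node_pair_one[OF l(2) _ l0(1)] by auto
      then show False using True node_pair_none[OF l0(2), of l0] by auto
    qed
    moreover have "P = P0"
      using node_subset_eq[OF l(2) l0(2)] True \<open>l = l0\<close> by simp
    ultimately show ?thesis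
      using path True point unfolding second_diff_diff point_bump_def by simp
  next
    case False
    then have "0 \<le> second_diff (path_bump k P0) P (2*l) (Suc (2*l))"
      using second_diff_path_bump_node[OF l(2,1), of P0] node_pair_one[OF l0(2) _ l(1)] by auto
    then show ?thesis
      using point unfolding second_diff_diff point_bump_def by simp
  qed
qed

lemma path_bump_root: "path_bump k Q {} = 1/4"
  unfolding path_bump_def using node_root[of k] by auto

lemma path_bump_off_path:
  assumes "node k h Q" "Y \<in> tree_domain k" "Y \<noteq> {}" "Y \<noteq> Q"
  shows "path_bump k Q Y = 0"
proof -
  have "\<not> (Y \<subseteq> Q \<and> (\<exists>h. node k h Y))"
  proof
    assume "Y \<subseteq> Q \<and> (\<exists>h. node k h Y)"
    moreover from this have "Y \<notin> caps k"
      unfolding caps_def using not_node_cap by blast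
    ultimately show False
      using assms node_subset_eq[OF _ assms(1)] unfolding tree_domain_def by blast
  qed
  then show ?thesis unfolding path_bump_def by simp
qed

lemma extendable_restrict_tree_fn:
  assumes "submodular n (\<lambda>Y. base k Y + p Y)"
    and "\<And>Y. Y \<in> A \<Longrightarrow> Y \<in> tree_domain k \<Longrightarrow> p Y = (if Y = {} then 1/4 else 0)"
  shows "extendable n (tree_fn k |` A)"
  unfolding extendable_def
proof (intro exI conjI ballI)
  fix Y assume "Y \<in> dom (tree_fn k |` A)"
  then have "Y \<in> A" "Y \<in> tree_domain k"
    by (simp_all add: dom_tree_fn)
  then show "(tree_fn k |` A) Y = Some (base k Y + p Y)"
    using assms(2) by (simp add: tree_fn_def)
qed (fact assms(1))

lemma extendable_tree_fn_without_point:
  assumes "2*k \<le> n" "x \<in> tree_domain k" "x \<notin> A"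
  shows "extendable n (tree_fn k |` A)"
proof -
  consider "x = {}" | "node k 0 x" | l0 P0 where "l0 < k" "node k (Suc l0) P0" "x = cap l0 P0"
    using assms(2) unfolding tree_domain_def caps_def by blast
  then show ?thesis
  proof cases
    case 1
    have "submodular n (\<lambda>Y. base k Y + 0)"
      by (rule submodular_base_plus[OF assms(1)]) (simp_all add: second_diff_def)
    then show ?thesis
      by (rule extendable_restrict_tree_fn) (use 1 assms(3) in auto)
  next
    case 2
    show ?thesis
    proof (rule extendable_restrict_tree_fn[OF submodular_base_path_bump_leaf[OF assms(1) 2]])
      fix Y assume "Y \<in> A" "Y \<in> tree_domain k"
      then show "path_bump k x Y = (if Y = {} then 1/4 else 0)"
        using path_bump_root path_bump_off_path[OF 2] assms(3) by auto
    qed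
  next
    case 3
    show ?thesis
    proof (rule extendable_restrict_tree_fn[OF submodular_base_path_bump_cap[OF assms(1) 3(1,2)]])
      fix Y assume Y: "Y \<in> A" "Y \<in> tree_domain k"
      have "Y \<noteq> P0" if "Y \<noteq> {}"
        using tree_domain_inner_node_is_root[OF 3(2,1)] Y(2) that by blast
      then show "path_bump k P0 Y - point_bump (cap l0 P0) Y = (if Y = {} then 1/4 else 0)"
        using path_bump_root path_bump_off_path[OF 3(2) Y(2)] Y(1) assms(3) 3(3)
        unfolding point_bump_def by auto
    qed
  qed
qed

lemma minimally_non_extendable_tree_fn:
  assumes "0 < k" "2*k \<le> n"
  shows "minimally_non_extendable n (tree_fn k)"
  unfolding minimally_non_extendable_def
proof (intro conjI allI impI)
  show "\<not> extendable n (tree_fn k)"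
    using tree_fn_not_extendable[OF assms] .
  fix A assume "A \<subset> dom (tree_fn k)"
  then obtain x where "x \<in> tree_domain k" "x \<notin> A"
    unfolding dom_tree_fn by blast
  then show "extendable n (tree_fn k |` A)"
    using extendable_tree_fn_without_point[OF assms(2)] by blast
qed

definition leaf_of :: "nat \<Rightarrow> nat set \<Rightarrow> nat set" where
  "leaf_of k S = (\<lambda>m. 2*m + (if m \<in> S then 1 else 0)) ` {..<k}"

lemma even_in_leaf_of: "2*m \<in> leaf_of k S \<longleftrightarrow> m < k \<and> m \<notin> S"
  unfolding leaf_of_def by (auto split: if_splits) presburger+

lemma odd_in_leaf_of: "Suc (2*m) \<in> leaf_of k S \<longleftrightarrow> m < k \<and> m \<in> S"
  unfolding leaf_of_def by (auto split: if_splits) presburger+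

lemma node_leaf_of: "node k 0 (leaf_of k S)"
  unfolding node_def using even_in_leaf_of odd_in_leaf_of
  by (auto simp: leaf_of_def)

lemma inj_on_leaf_of: "inj_on (leaf_of k) (Pow {..<k})"
proof (rule inj_onI)
  fix S S' assume "S \<in> Pow {..<k}" "S' \<in> Pow {..<k}" "leaf_of k S = leaf_of k S'"
  then show "S = S'"
    using odd_in_leaf_of[of _ k S] odd_in_leaf_of[of _ k S'] by blast
qed

lemma card_tree_domain: "2^k \<le> card (tree_domain k)"
proof -
  have "finite (tree_domain k)"
    using tree_domain_subset[OF order_refl] by (rule finite_subset) simp
  moreover have "leaf_of k ` Pow {..<k} \<subseteq> tree_domain k"
    unfolding tree_domain_def using node_leaf_of by auto
  ultimately have "card (leaf_of k ` Pow {..<k}) \<le> card (tree_domain k)"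
    by (rule card_mono)
  then show ?thesis
    using card_image[OF inj_on_leaf_of] by (simp add: card_Pow)
qed

theorem theorem2:
  shows "\<exists>c::real. c > 0 \<and> (\<exists>N::nat. \<forall>n\<ge>N. \<exists>f.
           partial_fun_on n f \<and> minimally_non_extendable n f \<and>
           real (card (dom f)) \<ge> 2 powr (c * real n))"
proof (intro exI conjI allI impI)
  fix n :: nat assume "2 \<le> n"
  define k where "k = n div 2"
  have k: "0 < k" "2*k \<le> n" "real n / 4 \<le> real k"
    using \<open>2 \<le> n\<close> unfolding k_def by linarith+
  show "partial_fun_on n (tree_fn k)"
    unfolding partial_fun_on_def dom_tree_fn using tree_domain_subset[OF k(2)] .
  show "minimally_non_extendable n (tree_fn k)"
    using minimally_non_extendable_tree_fn[OF k(1,2)] .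
  have "2 powr (1/4 * real n) \<le> 2 powr real k"
    using k(3) by (intro powr_mono) simp_all
  also have "\<dots> \<le> real (card (dom (tree_fn k)))"
    using card_tree_domain[of k] unfolding dom_tree_fn powr_realpow[of 2 k, simplified]
    by (simp flip: of_nat_le_iff)
  finally show "2 powr (1/4 * real n) \<le> real (card (dom (tree_fn k)))" .
qed simp

end
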